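(* Let an FCA with state set $S$, neighborhood $m=l+1+r$, local rule $f$ and boundary type $b\in\{\text{null},\text{periodic}\}$ be given, let $G$ be its reversibility graph and $\mathrm{CG}$ its circuit graph. Let $N$ be a negative vertex of $G$ with value $k\ge1$, let $C_1,\dots,C_t$ be distinct circuits of $G$ with lengths $r_1,\dots,r_t$, and let $x_1,\dots,x_t\ge 0$ be integers such that for every $j$ with $x_j>0$ there is a path in $\mathrm{CG}$ from $C_j$ to $N$ all of whose vertices other than $N$ are circuits $C_{j'}$ with $x_{j'}>0$. Then the FCA is not $(k+x_1r_1+\dots+x_tr_t)$-cell-reversible.
   Context: A one-dimensional finite cellular automaton (FCA) is given by a state set $S=\{0,1,\dots,s-1\}$, integers $l,r\ge 0$ with neighborhood size $m=l+1+r\ge 2$, a local rule $f:S^m\to S$, and a boundary type $b\in\{\text{null},\text{periodic}\}$. For $n\ge 1$ the global map $\tau_n:S^n\to S^n$ sends $(x_0,\dots,x_{n-1})$ to $(y_0,\dots,y_{n-1})$ with $y_i=f(x_{i-l},\dots,x_{i+r})$, where for the null boundary $x_j=0$ whenever $j<0$ or $j>n-1$, and for the periodic boundary indices are taken modulo $n$. The FCA is $n$-cell-reversible if $\tau_n$ is a bijection (equivalently, since $S^n$ is finite, surjective). Reversibility graph (RG). Null boundary: vertices are subsets of $S^{m-1}$; the root is $N_0=\{(a_1,\dots,a_{m-1})\in S^{m-1}: a_1=\dots=a_l=0\}$; the acceptance set is $R=\{(a_1,\dots,a_{m-1})\in S^{m-1}: a_{m-r}=\dots=a_{m-1}=0\}$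 (so $R=S^{m-1}$ if $r=0$); for a subset $N$ and $c\in S$, $\delta(N,c)=\{(a_1,\dots,a_{m-1})\in S^{m-1}:\exists a_0\in S,\ (a_0,\dots,a_{m-2})\in N,\ f(a_0,a_1,\dots,a_{m-1})=c\}$. Periodic boundary: vertices are subsets of $S^{m-1}\times S^{m-1}$; the root and the acceptance set are $N_0=R=\{(a,a):a\in S^{m-1}\}$; $\delta(N,c)=\{((a_1,\dots,a_{m-1}),(b_1,\dots,b_{m-1})):\exists b_0\in S,\ ((a_1,\dots,a_{m-1}),(b_0,\dots,b_{m-2}))\in N,\ f(b_0,\dots,b_{m-1})=c\}$. In both cases the RG is the directed graph whose vertex set consists of all subsets obtainable from $N_0$ by repeatedly applying $\delta$ (including $N_0$; equal subsets are the same vertex; the empty set may occur), with, for each vertex $N$ and each $c\in S$, an edge labelled $c$ from $N$ to $\delta(N,c)$. The value of a vertex $N$ is the length of a shortest directed path from $N_0$ to $N$. A vertex $N$ is negative if $N\cap R=\emptyset$. A circuit is an elementary directed cycle of the RG (a closed directed path with no repeated vertex other than its start = end; a loop is a circuit of length $1$); its length is its number of edges, and it passes through $N$ if $N$ is one of its vertices. Circuit graph (CG): the undirected graph whose vertices are all negative vertices and all circuits of the RG; two circuits are joined by an edge if they have at least one RG-vertex in common; a circuit $D$ and a negative vertex $N$ are joined by an edge if $D$ passes through $N$; there are no other edges. *)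

theory Defs
  imports Main
begin

datatype boundary = Null | Periodic

definition tuples :: "nat \<Rightarrow> nat \<Rightarrow> nat list set" where
  "tuples s k = {a. length a = k \<and> (\<forall>c\<in>set a. c < s)}"

definition is_fca :: "nat \<Rightarrow> nat \<Rightarrow> nat \<Rightarrow> (nat list \<Rightarrow> nat) \<Rightarrow> bool" where
  "is_fca s l r f \<longleftrightarrow> l + 1 + r \<ge> 2 \<and> (\<forall>w\<in>tuples s (l + 1 + r). f w < s)"

definition cell :: "boundary \<Rightarrow> nat \<Rightarrow> nat list \<Rightarrow> int \<Rightarrow> nat" where
  "cell b n xs k = (case b of
      Null \<Rightarrow> (if 0 \<le> k \<and> k < int n then xs ! nat k else 0)
    | Periodic \<Rightarrow> xs ! nat (k mod int n))"

definition tau :: "boundary \<Rightarrow> nat \<Rightarrow> nat \<Rightarrow> (nat list \<Rightarrow> nat) \<Rightarrow> nat \<Rightarrow> nat list \<Rightarrow> nat list" where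
  "tau b l r f n xs =
     map (\<lambda>i. f (map (\<lambda>j. cell b n xs (int i + int j - int l)) [0..<l + 1 + r])) [0..<n]"

definition cell_reversible :: "boundary \<Rightarrow> nat \<Rightarrow> nat \<Rightarrow> nat \<Rightarrow> (nat list \<Rightarrow> nat) \<Rightarrow> nat \<Rightarrow> bool" where
  "cell_reversible b s l r f n \<longleftrightarrow> bij_betw (tau b l r f n) (tuples s n) (tuples s n)"

text \<open>Elements of RG vertices: a (m-1)-tuple for the null boundary, a pair of
  (m-1)-tuples for the periodic boundary.\<close>
datatype rgelem = NElem "nat list" | PElem "nat list" "nat list"

definition rg_root :: "boundary \<Rightarrow> nat \<Rightarrow> nat \<Rightarrow> nat \<Rightarrow> rgelem set" where
  "rg_root b s l r = (case b of
      Null \<Rightarrow> {NElem a | a. a \<in> tuples s (l + r) \<and> take l a = replicate l 0}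
    | Periodic \<Rightarrow> {PElem a a | a. a \<in> tuples s (l + r)})"

definition rg_acc :: "boundary \<Rightarrow> nat \<Rightarrow> nat \<Rightarrow> nat \<Rightarrow> rgelem set" where
  "rg_acc b s l r = (case b of
      Null \<Rightarrow> {NElem a | a. a \<in> tuples s (l + r) \<and> drop l a = replicate r 0}
    | Periodic \<Rightarrow> {PElem a a | a. a \<in> tuples s (l + r)})"

definition rg_delta :: "boundary \<Rightarrow> nat \<Rightarrow> nat \<Rightarrow> nat \<Rightarrow> (nat list \<Rightarrow> nat) \<Rightarrow> rgelem set \<Rightarrow> nat \<Rightarrow> rgelem set" where
  "rg_delta b s l r f N c = (case b of
      Null \<Rightarrow> {NElem a | a. a \<in> tuples s (l + r) \<and>
                 (\<exists>a0<s. NElem (a0 # butlast a) \<in> N \<and> f (a0 # a) = c)}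
    | Periodic \<Rightarrow> {PElem a bb | a bb. a \<in> tuples s (l + r) \<and> bb \<in> tuples s (l + r) \<and>
                 (\<exists>b0<s. PElem a (b0 # butlast bb) \<in> N \<and> f (b0 # bb) = c)})"

inductive_set reach :: "('v \<Rightarrow> nat \<Rightarrow> 'v) \<Rightarrow> 'v \<Rightarrow> nat \<Rightarrow> 'v set"
  for delta N0 s where
  root: "N0 \<in> reach delta N0 s"
| step: "N \<in> reach delta N0 s \<Longrightarrow> c < s \<Longrightarrow> delta N c \<in> reach delta N0 s"

definition edge :: "('v \<Rightarrow> nat \<Rightarrow> 'v) \<Rightarrow> nat \<Rightarrow> 'v \<Rightarrow> 'v \<Rightarrow> bool" where
  "edge delta s N N' \<longleftrightarrow> (\<exists>c<s. delta N c = N')"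

definition vvalue :: "('v \<Rightarrow> nat \<Rightarrow> 'v) \<Rightarrow> 'v \<Rightarrow> nat \<Rightarrow> 'v \<Rightarrow> nat" where
  "vvalue delta N0 s N =
     (LEAST k. \<exists>w. length w = k \<and> (\<forall>c\<in>set w. c < s) \<and> foldl delta N0 w = N)"

definition is_circuit :: "('v \<Rightarrow> nat \<Rightarrow> 'v) \<Rightarrow> 'v \<Rightarrow> nat \<Rightarrow> 'v list \<Rightarrow> bool" where
  "is_circuit delta N0 s vs \<longleftrightarrow> vs \<noteq> [] \<and> distinct vs \<and> set vs \<subseteq> reach delta N0 s \<and>
     (\<forall>i<length vs. edge delta s (vs ! i) (vs ! ((i + 1) mod length vs)))"

definition same_circuit :: "'v list \<Rightarrow> 'v list \<Rightarrow> bool" where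
  "same_circuit C D \<longleftrightarrow> (\<exists>q. rotate q C = D)"

end

theory Submission
  imports Defs
begin

text \<open>Reading the image \<open>\<tau>\<^sub>n(x)\<close> of a configuration from the root of the reversibility
  graph always ends in a vertex meeting the acceptance set, because the vertex reached after
  \<open>i\<close> letters contains the window of \<open>m - 1\<close> cells of \<open>x\<close> starting at position \<open>i - l\<close>.
  On the other hand, a shortest word leading to \<open>N\<close> (of length \<open>k\<close>), followed by a closed walk
  at \<open>N\<close> that runs through each circuit \<open>C\<^sub>j\<close> exactly \<open>x\<^sub>j\<close> times, is a word of length
  \<open>n = k + \<Sigma> x\<^sub>j r\<^sub>j\<close> ending in the negative vertex \<open>N\<close>. Such a closed walk exists because
  circuits can be spliced into a closed walk at any vertex it visits, and each used circuit
  is linked to \<open>N\<close> through used circuits. Hence \<open>\<tau>\<^sub>n\<close> is not surjective.\<close>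

lemma reach_imp_word:
  assumes "v \<in> reach delta root s"
  shows "\<exists>w \<in> lists {..<s}. foldl delta root w = v"
  using assms
proof induction
  case root
  show ?case by (intro bexI[of _ "[]"]) auto
next
  case (step v c)
  then obtain w where "w \<in> lists {..<s}" "foldl delta root w = v" by blast
  with step show ?case by (intro bexI[of _ "w @ [c]"]) auto
qed

lemma vvalue_word:
  assumes "v \<in> reach delta root s"
  obtains w where "w \<in> lists {..<s}" "length w = vvalue delta root s v" "foldl delta root w = v"
proof -
  let ?P = "\<lambda>k. \<exists>w. length w = k \<and> (\<forall>c\<in>set w. c < s) \<and> foldl delta root w = v"
  obtain w where "w \<in> lists {..<s}" "foldl delta root w = v" using reach_imp_word[OF assms] by blast
  then have "?P (length w)" by auto
  then have "?P (LEAST k. ?P k)" by (rule LeastI)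
  then show thesis using that unfolding vvalue_def by auto
qed

definition walk_vertices :: "('v \<Rightarrow> nat \<Rightarrow> 'v) \<Rightarrow> 'v \<Rightarrow> nat list \<Rightarrow> 'v set" where
  "walk_vertices delta v w = (\<lambda>i. foldl delta v (take i w)) ` {..length w}"

lemma walk_vertices_Nil [simp]: "walk_vertices delta v [] = {v}"
  by (simp add: walk_vertices_def)

lemma start_in_walk_vertices [simp]: "v \<in> walk_vertices delta v w"
  unfolding walk_vertices_def by (rule image_eqI[of _ _ 0]) auto

lemma walk_vertices_append:
  "walk_vertices delta v (w1 @ w2) =
     walk_vertices delta v w1 \<union> walk_vertices delta (foldl delta v w1) w2"
proof (intro equalityI subsetI)
  fix u assume "u \<in> walk_vertices delta v (w1 @ w2)"
  then obtain i where i: "i \<le> length (w1 @ w2)" "u = foldl delta v (take i (w1 @ w2))"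
    unfolding walk_vertices_def by auto
  show "u \<in> walk_vertices delta v w1 \<union> walk_vertices delta (foldl delta v w1) w2"
  proof (cases "i \<le> length w1")
    case True
    then have "u = foldl delta v (take i w1)" using i(2) by simp
    then show ?thesis using True unfolding walk_vertices_def by blast
  next
    case False
    then have "u = foldl delta (foldl delta v w1) (take (i - length w1) w2)"
      "i - length w1 \<le> length w2"
      using i by auto
    then show ?thesis unfolding walk_vertices_def by blast
  qed
next
  fix u assume "u \<in> walk_vertices delta v w1 \<union> walk_vertices delta (foldl delta v w1) w2"
  then show "u \<in> walk_vertices delta v (w1 @ w2)"
  proof
    assume "u \<in> walk_vertices delta v w1"
    then obtain i where "i \<le> length w1" "u = foldl delta v (take i w1)"
      unfolding walk_vertices_def by auto
    then have "i \<le> length (w1 @ w2)" "u = foldl delta v (take i (w1 @ w2))" by simp_all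
    then show ?thesis unfolding walk_vertices_def by blast
  next
    assume "u \<in> walk_vertices delta (foldl delta v w1) w2"
    then obtain i where "i \<le> length w2" "u = foldl delta (foldl delta v w1) (take i w2)"
      unfolding walk_vertices_def by auto
    then have "length w1 + i \<le> length (w1 @ w2)"
      "u = foldl delta v (take (length w1 + i) (w1 @ w2))"
      by simp_all
    then show ?thesis unfolding walk_vertices_def by blast
  qed
qed

lemma closed_walk_power:
  assumes "foldl delta u c = u"
  shows "foldl delta u (concat (replicate m c)) = u"
    and "0 < m \<Longrightarrow> walk_vertices delta u (concat (replicate m c)) = walk_vertices delta u c"
proof -
  show closed: "foldl delta u (concat (replicate m c)) = u" for m
    using assms by (induction m) auto
  show "0 < m \<Longrightarrow> walk_vertices delta u (concat (replicate m c)) = walk_vertices delta u c"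
  proof (induction m)
    case (Suc m)
    show ?case
    proof (cases m)
      case 0
      then show ?thesis by simp
    next
      case (Suc m')
      then show ?thesis using Suc.IH assms by (simp add: walk_vertices_append)
    qed
  qed simp
qed

lemma splice_closed_walk:
  assumes "foldl delta v w = v" "u \<in> walk_vertices delta v w" "foldl delta u c = u"
  obtains w1 w2 where "w = w1 @ w2" "foldl delta v (w1 @ c @ w2) = v"
    "walk_vertices delta v (w1 @ c @ w2) = walk_vertices delta v w \<union> walk_vertices delta u c"
proof -
  obtain i where u: "u = foldl delta v (take i w)"
    using assms(2) unfolding walk_vertices_def by blast
  have w: "w = take i w @ drop i w" by simp
  have "foldl delta u (drop i w) = v"
    using assms(1) u w by (metis foldl_append)
  moreover have "walk_vertices delta v w =
      walk_vertices delta v (take i w) \<union> walk_vertices delta u (drop i w)"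
    using u walk_vertices_append[of delta v "take i w" "drop i w"] by simp
  ultimately show thesis
    using u assms(3) by (intro that[OF w]) (auto simp: walk_vertices_append)
qed

lemma circuit_walk:
  assumes "is_circuit delta root s vs" "i < length vs"
  shows "\<exists>w \<in> lists {..<s}. length w = d \<and>
           (\<forall>e\<le>d. foldl delta (vs ! i) (take e w) = vs ! ((i + e) mod length vs))"
proof (induction d)
  case 0
  show ?case using assms(2) by (intro bexI[of _ "[]"]) auto
next
  case (Suc d)
  let ?p = "length vs"
  obtain w where w: "w \<in> lists {..<s}" "length w = d"
    "\<forall>e\<le>d. foldl delta (vs ! i) (take e w) = vs ! ((i + e) mod ?p)"
    using Suc.IH by blast
  have "(i + d) mod ?p < ?p" using assms(2) by (intro mod_less_divisor) linarith
  then have "edge delta s (vs ! ((i + d) mod ?p)) (vs ! (((i + d) mod ?p + 1) mod ?p))"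
    using assms(1) unfolding is_circuit_def by blast
  moreover have "((i + d) mod ?p + 1) mod ?p = (i + Suc d) mod ?p" by (simp add: mod_Suc_eq)
  ultimately obtain c where c: "c < s" "delta (vs ! ((i + d) mod ?p)) c = vs ! ((i + Suc d) mod ?p)"
    unfolding edge_def by auto
  have "foldl delta (vs ! i) (take e (w @ [c])) = vs ! ((i + e) mod ?p)" if "e \<le> Suc d" for e
  proof (cases "e \<le> d")
    case True
    then show ?thesis using w by simp
  next
    case False
    then have "e = Suc d" using that by simp
    then show ?thesis using w(2) w(3)[rule_format, of d] c(2) by simp
  qed
  then show ?case using w c by (intro bexI[of _ "w @ [c]"]) auto
qed

lemma circuit_closed_walk:
  assumes "is_circuit delta root s vs" "u \<in> set vs"
  obtains c where "c \<in> lists {..<s}" "length c = length vs" "foldl delta u c = u"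
    "set vs \<subseteq> walk_vertices delta u c"
proof -
  let ?p = "length vs"
  obtain i where i: "i < ?p" "vs ! i = u" using assms(2) by (auto simp: in_set_conv_nth)
  obtain c where c: "c \<in> lists {..<s}" "length c = ?p"
    "\<forall>e\<le>?p. foldl delta u (take e c) = vs ! ((i + e) mod ?p)"
    using circuit_walk[OF assms(1) i(1), of ?p] i(2) by blast
  have "foldl delta u c = u" using c(2) c(3)[rule_format, of ?p] i by simp
  moreover have "vs ! q \<in> walk_vertices delta u c" if "q < ?p" for q
  proof -
    define e where "e = (q + ?p - i) mod ?p"
    have "e \<le> ?p" unfolding e_def using i(1) by (intro less_imp_le mod_less_divisor) linarith
    moreover have "(i + e) mod ?p = q"
      unfolding e_def using i(1) that by (simp add: mod_add_right_eq)
    ultimately show ?thesis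
      using c(2) c(3) unfolding walk_vertices_def by (metis atMost_iff image_eqI)
  qed
  ultimately show thesis
    using c by (intro that) (auto simp: in_set_conv_nth)
qed

definition has_circuit_tour ::
    "('v \<Rightarrow> nat \<Rightarrow> 'v) \<Rightarrow> nat \<Rightarrow> 'v \<Rightarrow> (nat \<Rightarrow> 'v list) \<Rightarrow> (nat \<Rightarrow> nat) \<Rightarrow> nat set \<Rightarrow> bool" where
  "has_circuit_tour delta s v C x K \<longleftrightarrow>
     (\<exists>w \<in> lists {..<s}. length w = (\<Sum>j\<in>K. x j * length (C j)) \<and> foldl delta v w = v \<and>
        insert v (\<Union>j\<in>K. set (C j)) \<subseteq> walk_vertices delta v w)"

lemma has_circuit_tour_empty: "has_circuit_tour delta s v C x {}"
  unfolding has_circuit_tour_def by (intro bexI[of _ "[]"]) auto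

lemma has_circuit_tour_insert:
  assumes "has_circuit_tour delta s v C x K" "finite K"
    and "is_circuit delta root s (C j)" "0 < x j"
    and "set (C j) \<inter> insert v (\<Union>i\<in>K. set (C i)) \<noteq> {}"
  shows "has_circuit_tour delta s v C x (insert j K)"
proof (cases "j \<in> K")
  case True
  then show ?thesis using assms(1) by (simp add: insert_absorb)
next
  case False
  obtain w where w: "w \<in> lists {..<s}" "length w = (\<Sum>i\<in>K. x i * length (C i))"
    "foldl delta v w = v" "insert v (\<Union>i\<in>K. set (C i)) \<subseteq> walk_vertices delta v w"
    using assms(1) unfolding has_circuit_tour_def by blast
  obtain u where u: "u \<in> set (C j)" "u \<in> walk_vertices delta v w"
    using assms(5) w(4) by blast
  obtain c where c: "c \<in> lists {..<s}" "length c = length (C j)" "foldl delta u c = u"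
    "set (C j) \<subseteq> walk_vertices delta u c"
    using circuit_closed_walk[OF assms(3) u(1)] by blast
  let ?c = "concat (replicate (x j) c)"
  have c': "foldl delta u ?c = u" "walk_vertices delta u ?c = walk_vertices delta u c"
    using closed_walk_power[OF c(3)] assms(4) by auto
  obtain w1 w2 where w12: "w = w1 @ w2" "foldl delta v (w1 @ ?c @ w2) = v"
    "walk_vertices delta v (w1 @ ?c @ w2) = walk_vertices delta v w \<union> walk_vertices delta u ?c"
    using splice_closed_walk[OF w(3) u(2) c'(1)] by blast
  have "length (w1 @ ?c @ w2) = (\<Sum>i\<in>insert j K. x i * length (C i))"
    using w(2) w12(1) c(2) False assms(2) by (simp add: length_concat sum_list_replicate)
  moreover have "w1 @ ?c @ w2 \<in> lists {..<s}" using w(1) w12(1) c(1) by auto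
  ultimately show ?thesis
    unfolding has_circuit_tour_def using w(4) w12 c(4) c'(2)
    by (intro bexI[of _ "w1 @ ?c @ w2"]) auto
qed

text \<open>A path of the circuit graph from the circuit \<open>C (hd p)\<close> to the vertex \<open>v\<close> that uses
  only circuits indexed by \<open>A\<close>.\<close>
definition circuit_chain :: "(nat \<Rightarrow> 'v list) \<Rightarrow> 'v \<Rightarrow> nat set \<Rightarrow> nat list \<Rightarrow> bool" where
  "circuit_chain C v A p \<longleftrightarrow> p \<noteq> [] \<and> set p \<subseteq> A \<and>
     successively (\<lambda>i j. set (C i) \<inter> set (C j) \<noteq> {}) p \<and> v \<in> set (C (last p))"

lemma circuit_chain_conv_nth:
  "circuit_chain C v A p \<longleftrightarrow> p \<noteq> [] \<and> set p \<subseteq> A \<and>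
     (\<forall>i. i + 1 < length p \<longrightarrow> set (C (p ! i)) \<inter> set (C (p ! (i + 1))) \<noteq> {}) \<and>
     v \<in> set (C (last p))"
  by (simp add: circuit_chain_def successively_conv_nth)

lemma has_circuit_tour_Un_chain:
  assumes "has_circuit_tour delta s v C x K" "finite K"
    and "circuit_chain C v A p"
    and "\<forall>i\<in>A. is_circuit delta root s (C i) \<and> 0 < x i"
  shows "has_circuit_tour delta s v C x (K \<union> set p)"
  using assms(3)
proof (induction p)
  case Nil
  then show ?case by (simp add: circuit_chain_def)
next
  case (Cons j q)
  then have j: "is_circuit delta root s (C j)" "0 < x j"
    using assms(4) by (auto simp: circuit_chain_def)
  show ?case
  proof (cases "q = []")
    case True
    then show ?thesis
      using Cons.prems j
      by (auto intro: has_circuit_tour_insert[OF assms(1,2)] simp: circuit_chain_def)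
  next
    case False
    then have IH: "has_circuit_tour delta s v C x (K \<union> set q)"
      using Cons by (simp add: circuit_chain_def successively_Cons)
    have "set (C j) \<inter> set (C (hd q)) \<noteq> {}"
      using Cons.prems False by (simp add: circuit_chain_def successively_Cons)
    moreover have "hd q \<in> K \<union> set q" using False by simp
    ultimately have "set (C j) \<inter> insert v (\<Union>i\<in>K \<union> set q. set (C i)) \<noteq> {}" by blast
    then have "has_circuit_tour delta s v C x (insert j (K \<union> set q))"
      using j assms(2) by (intro has_circuit_tour_insert[OF IH]) simp_all
    then show ?thesis by simp
  qed
qed

lemma has_circuit_tour_connected:
  assumes "finite A"
    and "\<forall>j\<in>A. is_circuit delta root s (C j) \<and> 0 < x j"
    and "\<forall>j\<in>A. \<exists>p. hd p = j \<and> circuit_chain C v A p"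
  shows "has_circuit_tour delta s v C x A"
proof -
  obtain p where p: "\<forall>j\<in>A. hd (p j) = j \<and> circuit_chain C v A (p j)"
    using bchoice[OF assms(3)] by blast
  have "has_circuit_tour delta s v C x (\<Union>j\<in>F. set (p j))" if "F \<subseteq> A" for F
    using finite_subset[OF that assms(1)] that
  proof (induction F rule: finite_induct)
    case empty
    then show ?case by (simp add: has_circuit_tour_empty)
  next
    case (insert j F)
    then have "has_circuit_tour delta s v C x ((\<Union>i\<in>F. set (p i)) \<union> set (p j))"
      using p assms(2) by (intro has_circuit_tour_Un_chain[where root = root]) simp_all
    then show ?case by (simp add: Un_commute)
  qed
  then have "has_circuit_tour delta s v C x (\<Union>j\<in>A. set (p j))" by blast
  moreover have "(\<Union>j\<in>A. set (p j)) = A"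
  proof
    show "(\<Union>j\<in>A. set (p j)) \<subseteq> A" using p by (auto simp: circuit_chain_def)
    show "A \<subseteq> (\<Union>j\<in>A. set (p j))" using p hd_in_set by (fastforce simp: circuit_chain_def)
  qed
  ultimately show ?thesis by simp
qed

lemma cell_less:
  assumes "xs \<in> tuples s n" "0 < n"
  shows "cell b n xs i < s"
proof -
  have nth: "xs ! j < s" if "j < n" for j
    using assms(1) that by (auto simp: tuples_def)
  show ?thesis
  proof (cases b)
    case Null
    then show ?thesis using nth[of 0] nth[of "nat i"] assms(2) by (auto simp: cell_def)
  next
    case Periodic
    have "nat (i mod int n) < n" using assms(2) by (simp add: nat_less_iff)
    then show ?thesis using Periodic nth by (simp add: cell_def)
  qed
qed

lemma tau_conv_windows:
  "tau b l r f n xs =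
     map (\<lambda>i. f (map (\<lambda>j. cell b n xs (int j - int l)) [i..<Suc i + (l + r)])) [0..<n]"
proof -
  have "map (\<lambda>j. cell b n xs (int j - int l)) [i..<Suc i + (l + r)] =
        map (\<lambda>j. cell b n xs (int i + int j - int l)) [0..<l + 1 + r]" for i
    by (rule map_upt_eqI) (auto simp del: upt_Suc)
  then show ?thesis unfolding tau_def by simp
qed

text \<open>The element of an RG vertex that witnesses a preimage after \<open>i\<close> letters: the window
  \<open>x\<^bsub>i-l\<^esub>, \<dots>, x\<^bsub>i+r-1\<^esub>\<close> of \<open>m - 1\<close> cells, paired in the periodic case with the
  initial window, which the acceptance condition compares it with.\<close>
definition window_elem :: "boundary \<Rightarrow> nat list \<Rightarrow> nat list \<Rightarrow> rgelem" where
  "window_elem b a0 a = (case b of Null \<Rightarrow> NElem a | Periodic \<Rightarrow> PElem a0 a)"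

lemma rg_delta_window:
  assumes "\<forall>j. z j < s" "1 \<le> l + r" "a0 \<in> tuples s (l + r)"
    and "window_elem b a0 (map z [i..<i + (l + r)]) \<in> P"
  shows "window_elem b a0 (map z [Suc i..<Suc i + (l + r)])
           \<in> rg_delta b s l r f P (f (map z [i..<Suc i + (l + r)]))"
proof -
  let ?a = "map z [Suc i..<Suc i + (l + r)]"
  have a: "?a \<in> tuples s (l + r)" using assms(1) by (auto simp: tuples_def)
  have "[Suc i..<Suc i + (l + r)] = [Suc i..<i + (l + r)] @ [i + (l + r)]"
    using assms(2) by (simp add: upt_Suc_append)
  then have "butlast ?a = map z [Suc i..<i + (l + r)]"
    by (simp only: map_butlast[symmetric] butlast_snoc)
  moreover have "[i..<i + (l + r)] = i # [Suc i..<i + (l + r)]"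
    using assms(2) by (intro upt_conv_Cons) linarith
  ultimately have shift: "z i # butlast ?a = map z [i..<i + (l + r)]"
    by simp
  have "[i..<Suc i + (l + r)] = i # [Suc i..<Suc i + (l + r)]" by (rule upt_conv_Cons) simp
  then have "z i # ?a = map z [i..<Suc i + (l + r)]" by (simp only: list.map)
  then show ?thesis
    using assms(1,3,4) a shift by (cases b) (force simp: window_elem_def rg_delta_def)+
qed

lemma rg_run_window:
  assumes "\<forall>j. z j < s" "1 \<le> l + r" "a0 \<in> tuples s (l + r)"
    and "window_elem b a0 (map z [0..<l + r]) \<in> P"
  shows "window_elem b a0 (map z [n..<n + (l + r)])
           \<in> foldl (rg_delta b s l r f) P (map (\<lambda>i. f (map z [i..<Suc i + (l + r)])) [0..<n])"
proof (induction n)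
  case 0
  then show ?case using assms(4) by simp
next
  case (Suc n)
  then show ?case using rg_delta_window[OF assms(1-3)] by simp
qed

lemma rg_accepts_tau:
  assumes "xs \<in> tuples s n" "0 < n" "1 \<le> l + r"
  shows "foldl (rg_delta b s l r f) (rg_root b s l r) (tau b l r f n xs) \<inter> rg_acc b s l r \<noteq> {}"
proof -
  define z where "z j = cell b n xs (int j - int l)" for j
  define W where "W i = map z [i..<i + (l + r)]" for i
  have z: "\<forall>j. z j < s" using cell_less[OF assms(1,2)] by (simp add: z_def)
  have W: "W i \<in> tuples s (l + r)" for i using z by (auto simp: W_def tuples_def)
  have "window_elem b (W 0) (W 0) \<in> rg_root b s l r"
  proof (cases b)
    case Null
    have "take l (W 0) = map z [0..<l]" by (simp add: W_def take_map)
    also have "\<dots> = replicate l 0" using Null by (intro nth_equalityI) (simp_all add: z_def cell_def)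
    finally show ?thesis using Null W by (simp add: window_elem_def rg_root_def)
  next
    case Periodic
    then show ?thesis using W by (simp add: window_elem_def rg_root_def)
  qed
  moreover have "window_elem b (W 0) (W n) \<in> rg_acc b s l r"
  proof (cases b)
    case Null
    have "drop l (W n) = map z [n + l..<n + (l + r)]" by (simp add: W_def drop_map)
    also have "\<dots> = replicate r 0" using Null by (intro nth_equalityI) (simp_all add: z_def cell_def)
    finally show ?thesis using Null W by (simp add: window_elem_def rg_acc_def)
  next
    case Periodic
    have "z (n + j) = z j" for j
    proof -
      have "(int (n + j) - int l) mod int n = (int j - int l) mod int n"
        by (metis add_diff_eq mod_add_self1 of_nat_add)
      then show ?thesis using Periodic by (simp add: z_def cell_def)
    qed
    then have "W n = W 0" by (intro nth_equalityI) (simp_all add: W_def)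
    then show ?thesis using Periodic W by (simp add: window_elem_def rg_acc_def)
  qed
  moreover have "tau b l r f n xs = map (\<lambda>i. f (map z [i..<Suc i + (l + r)])) [0..<n]"
    unfolding z_def by (rule tau_conv_windows)
  ultimately have "window_elem b (W 0) (W n)
      \<in> foldl (rg_delta b s l r f) (rg_root b s l r) (tau b l r f n xs)"
    using rg_run_window[OF z assms(3) W[of 0]] by (simp add: W_def)
  with \<open>window_elem b (W 0) (W n) \<in> rg_acc b s l r\<close> show ?thesis by blast
qed

lemma not_cell_reversible_if_negative_word:
  assumes "w \<in> tuples s n" "0 < n" "1 \<le> l + r"
    and "foldl (rg_delta b s l r f) (rg_root b s l r) w \<inter> rg_acc b s l r = {}"
  shows "\<not> cell_reversible b s l r f n"
proof
  assume "cell_reversible b s l r f n"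
  then have "tau b l r f n ` tuples s n = tuples s n"
    unfolding cell_reversible_def by (rule bij_betw_imp_surj_on)
  then obtain xs where "xs \<in> tuples s n" "w = tau b l r f n xs"
    using assms(1) by (metis imageE)
  then show False using rg_accepts_tau assms(2-4) by blast
qed

theorem theorem4:
  fixes b :: boundary and s l r :: nat and f :: "nat list \<Rightarrow> nat"
    and N :: "rgelem set" and k t :: nat
    and C :: "nat \<Rightarrow> rgelem set list" and x :: "nat \<Rightarrow> nat"
  assumes fca: "is_fca s l r f"
    and N_vertex: "N \<in> reach (rg_delta b s l r f) (rg_root b s l r) s"
    and N_neg: "N \<inter> rg_acc b s l r = {}"
    and N_val: "vvalue (rg_delta b s l r f) (rg_root b s l r) s N = k"
    and k_pos: "k \<ge> 1"
    and C_circ: "\<forall>j<t. is_circuit (rg_delta b s l r f) (rg_root b s l r) s (C j)"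
    and C_dist: "\<forall>i<t. \<forall>j<t. i \<noteq> j \<longrightarrow> \<not> same_circuit (C i) (C j)"
    and paths: "\<forall>j<t. x j > 0 \<longrightarrow>
        (\<exists>p. p \<noteq> [] \<and> hd p = j \<and> (\<forall>i\<in>set p. i < t \<and> x i > 0) \<and>
             (\<forall>i. i + 1 < length p \<longrightarrow> set (C (p ! i)) \<inter> set (C (p ! (i + 1))) \<noteq> {}) \<and>
             N \<in> set (C (last p)))"
  shows "\<not> cell_reversible b s l r f (k + (\<Sum>j<t. x j * length (C j)))"
proof -
  let ?delta = "rg_delta b s l r f" and ?root = "rg_root b s l r"
  define A where "A = {j. j < t \<and> 0 < x j}"
  obtain wk where wk: "wk \<in> lists {..<s}" "length wk = k" "foldl ?delta ?root wk = N"
    using vvalue_word[OF N_vertex] N_val by metis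
  have "\<forall>j\<in>A. \<exists>p. hd p = j \<and> circuit_chain C N A p"
    using paths unfolding A_def circuit_chain_conv_nth by (simp add: subset_eq) blast
  then have "has_circuit_tour ?delta s N C x A"
    using C_circ by (intro has_circuit_tour_connected) (auto simp: A_def)
  then obtain wc where wc: "wc \<in> lists {..<s}" "length wc = (\<Sum>j\<in>A. x j * length (C j))"
    "foldl ?delta N wc = N"
    unfolding has_circuit_tour_def by blast
  have "(\<Sum>j\<in>A. x j * length (C j)) = (\<Sum>j<t. x j * length (C j))"
    by (rule sum.mono_neutral_left) (auto simp: A_def)
  then show ?thesis
    using wk wc k_pos fca N_neg
    by (intro not_cell_reversible_if_negative_word[of "wk @ wc"])
      (auto simp: tuples_def is_fca_def)
qed

end
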